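(* Let $\{J_e\}$ be i.i.d. couplings with a common continuous distribution on $(0,\infty)$, indexed by the nearest-neighbor edges $e=\{x,x+1\}$ of $\mathbb Z$. For $x\in\mathbb Z$, let $z(x)\in\{x-1,x+1\}$ be the neighbor with $J_{x,z(x)}=\max\{J_{x,x-1},J_{x,x+1}\}$. Let $x_0=0$ and $x_{j+1}=z(x_j)$ for $j\ge0$, and define $$\tilde M=\min\{m\ge0: x_{m+2}=x_m\}.$$ Then $\tilde M$ is almost surely finite and, for every integer $k\ge0$, $$\mathbb P_J(\tilde M\ge k)=\frac{2}{(k+2)!},\qquad \mathbb P_J(\tilde M=k)=\frac{2(k+2)}{(k+3)!}.$$
   Context: $\tilde M$ is the number of steps from the origin along the directed path $x\mapsto z(x)$ until reaching an edge $\{x_m,z(x_m)\}$ with $z(z(x_m))=x_m$ (a "bully bond"). *)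

theory Defs
  imports "HOL-Probability.Probability"
begin

text \<open>A coupling configuration on the edges of Z is a function j :: int => real,
  where j x is the coupling J of the edge {x, x+1}.  Thus the two edges at x
  carry j (x-1) (edge {x-1,x}) and j x (edge {x,x+1}).\<close>

definition nbr :: "(int \<Rightarrow> real) \<Rightarrow> int \<Rightarrow> int" where
  "nbr j x = (if j (x - 1) < j x then x + 1 else x - 1)"

text \<open>Ties (probability zero) are broken towards x-1.\<close>

fun walk :: "(int \<Rightarrow> real) \<Rightarrow> nat \<Rightarrow> int" where
  "walk j 0 = 0"
| "walk j (Suc n) = nbr j (walk j n)"

definition Mtilde :: "(int \<Rightarrow> real) \<Rightarrow> enat" where
  "Mtilde j = (if \<exists>m. walk j (m + 2) = walk j m
               then enat (LEAST m. walk j (m + 2) = walk j m) else \<infinity>)"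

end

theory Submission
  imports Defs "HOL-Combinatorics.Permutations"
begin

text \<open>For the first k steps the walk never backtracks exactly when it runs straight
  to the right or straight to the left, i.e. when the k + 2 couplings of the edges it
  meets, read in walking order, increase.  Couplings without atoms are almost surely
  distinct, so almost surely exactly one of the (k + 2)! orderings of k + 2 of them
  occurs; by exchangeability all orderings are equally likely.  Hence each of the two
  monotone events has probability 1/(k + 2)!, which gives the tail 2/(k + 2)!; the point
  probabilities follow by differencing and finiteness from 2/(k + 2)! \<longrightarrow> 0.\<close>

section \<open>Sorting finitely many values by a permutation\<close>

lemma strict_mono_on_lessThan_Suc_iff:
  fixes f :: "nat \<Rightarrow> 'a::order"
  shows "strict_mono_on {..<Suc n} f \<longleftrightarrow> (\<forall>i<n. f i < f (Suc i))"
proof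
  assume step: "\<forall>i<n. f i < f (Suc i)"
  show "strict_mono_on {..<Suc n} f"
  proof (rule strict_mono_onI)
    fix r s assume "r \<in> {..<Suc n}" "s \<in> {..<Suc n}" "r < s"
    then show "f r < f s"
      using lift_Suc_mono_less_ivl[of "{..<n}" f r s] step by fastforce
  qed
qed (simp add: strict_mono_on_def)

lemma mono_on_lessThan_Suc_iff:
  fixes f :: "nat \<Rightarrow> 'a::order"
  shows "mono_on {..<Suc n} f \<longleftrightarrow> (\<forall>i<n. f i \<le> f (Suc i))"
proof
  assume step: "\<forall>i<n. f i \<le> f (Suc i)"
  show "mono_on {..<Suc n} f"
  proof (rule mono_onI)
    fix r s assume "r \<in> {..<Suc n}" "s \<in> {..<Suc n}" "r \<le> s"
    then show "f r \<le> f s"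
      using lift_Suc_mono_le_ivl[of "{..<n}" f r s] step by fastforce
  qed
qed (simp add: mono_on_def)

lemma strict_mono_on_same_image_eq:
  fixes f g :: "nat \<Rightarrow> 'a::linorder"
  assumes "strict_mono_on {..<n} f" "strict_mono_on {..<n} g" "f ` {..<n} = g ` {..<n}" "i < n"
  shows "f i = g i"
proof -
  have "map f [0..<n] = map g [0..<n]"
    using assms(1-3) by (intro strict_sorted_equal)
      (auto simp: sorted_wrt_iff_nth_less strict_mono_on_def atLeast0LessThan)
  then show ?thesis
    using assms(4) by simp
qed

lemma permutes_strict_mono_on_unique:
  fixes x :: "nat \<Rightarrow> 'a::linorder"
  assumes "\<sigma> permutes {..<n}" "\<tau> permutes {..<n}"
    and "strict_mono_on {..<n} (x \<circ> \<sigma>)" "strict_mono_on {..<n} (x \<circ> \<tau>)"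
  shows "\<sigma> = \<tau>"
proof
  fix i
  have "inj_on x (\<sigma> ` {..<n})"
    using assms(3) by (intro inj_on_imageI strict_mono_on_imp_inj_on)
  then have inj: "inj_on x {..<n}"
    using assms(1) by (simp add: permutes_image)
  show "\<sigma> i = \<tau> i"
  proof (cases "i < n")
    case True
    have "(x \<circ> \<sigma>) ` {..<n} = (x \<circ> \<tau>) ` {..<n}"
      using assms(1,2) by (metis image_comp permutes_image)
    then have "x (\<sigma> i) = x (\<tau> i)"
      using strict_mono_on_same_image_eq[OF assms(3,4) _ True] by simp
    moreover have "\<sigma> i \<in> {..<n}" "\<tau> i \<in> {..<n}"
      using True permutes_in_image[OF assms(1), of i] permutes_in_image[OF assms(2), of i] by simp_all
    ultimately show ?thesis
      by (rule inj_onD[OF inj])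
  next
    case False
    then show ?thesis
      using assms(1,2) by (simp add: permutes_not_in)
  qed
qed

lemma ex_permutes_strict_mono_on:
  fixes x :: "nat \<Rightarrow> 'a::linorder"
  assumes inj: "inj_on x {..<n}"
  obtains \<sigma> where "\<sigma> permutes {..<n}" "strict_mono_on {..<n} (x \<circ> \<sigma>)"
proof
  define xs where "xs = sorted_list_of_set (x ` {..<n})"
  define \<sigma> where "\<sigma> i = (if i < n then the_inv_into {..<n} x (xs ! i) else i)" for i
  have xs: "sorted_wrt (<) xs" "length xs = n" "set xs = x ` {..<n}"
    using inj by (simp_all add: xs_def card_image)
  have "bij_betw ((!) xs) {..<n} (x ` {..<n})"
    using xs by (intro bij_betw_nth) (auto simp: strict_sorted_iff)
  then have "bij_betw (the_inv_into {..<n} x \<circ> (!) xs) {..<n} {..<n}"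
    using inj by (meson bij_betw_trans bij_betw_the_inv_into inj_on_imp_bij_betw)
  then have "bij_betw \<sigma> {..<n} {..<n}"
    by (rule bij_betw_cong[THEN iffD1, rotated]) (simp add: \<sigma>_def)
  then show "\<sigma> permutes {..<n}"
    by (rule bij_imp_permutes) (simp add: \<sigma>_def)
  have "x (\<sigma> i) = xs ! i" if "i < n" for i
  proof -
    have "xs ! i \<in> x ` {..<n}"
      using that xs(2,3) nth_mem by blast
    then show ?thesis
      using that by (simp add: \<sigma>_def f_the_inv_into_f[OF inj])
  qed
  then show "strict_mono_on {..<n} (x \<circ> \<sigma>)"
    using xs by (auto intro!: strict_mono_onI simp: sorted_wrt_iff_nth_less)
qed

section \<open>Walks that do not backtrack\<close>

text \<open>Ties send the walk to the left (see \<open>nbr\<close>), hence the non-strict inequality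
  in \<open>leftward\<close>.\<close>

definition rightward :: "nat \<Rightarrow> (int \<Rightarrow> real) \<Rightarrow> bool" where
  "rightward k j \<longleftrightarrow> (\<forall>i\<le>k. j (int i - 1) < j (int i))"

definition leftward :: "nat \<Rightarrow> (int \<Rightarrow> real) \<Rightarrow> bool" where
  "leftward k j \<longleftrightarrow> (\<forall>i\<le>k. j (- int i) \<le> j (- int i - 1))"

lemma rightward_iff_strict_mono_on:
  "rightward k j \<longleftrightarrow> strict_mono_on {..<k + 2} (\<lambda>i. j (int i - 1))"
  by (simp add: rightward_def strict_mono_on_lessThan_Suc_iff less_Suc_eq_le)

lemma leftward_iff_mono_on:
  "leftward k j \<longleftrightarrow> mono_on {..<k + 2} (\<lambda>i. j (- int i))"
proof -
  have "- int (Suc i) = - int i - 1" for i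
    by simp
  then show ?thesis
    by (simp only: leftward_def mono_on_lessThan_Suc_iff add_2_eq_Suc' less_Suc_eq_le)
qed

lemma rightward_imp_not_leftward:
  assumes "rightward k j"
  shows "\<not> leftward k j"
proof -
  have "j (- 1) < j 0"
    using assms by (auto simp: rightward_def dest: spec[of _ 0])
  then show ?thesis
    by (auto simp: leftward_def dest: spec[of _ 0])
qed

lemma rightward_Suc:
  "rightward (Suc k) j \<longleftrightarrow> rightward k j \<and> j (int (Suc k) - 1) < j (int (Suc k))"
  by (simp add: rightward_def le_Suc_eq all_conj_distrib imp_disjL)

lemma leftward_Suc:
  "leftward (Suc k) j \<longleftrightarrow> leftward k j \<and> j (- int (Suc k)) \<le> j (- int (Suc k) - 1)"
  by (simp add: leftward_def le_Suc_eq all_conj_distrib imp_disjL)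

lemma walk_rightward: "rightward k j \<Longrightarrow> m \<le> k + 1 \<Longrightarrow> walk j m = int m"
  by (induction m) (auto simp: rightward_def nbr_def)

lemma walk_leftward: "leftward k j \<Longrightarrow> m \<le> k + 1 \<Longrightarrow> walk j m = - int m"
  by (induction m) (auto simp: leftward_def nbr_def)

lemma no_backtrack_iff: "(\<forall>m<k. walk j (m + 2) \<noteq> walk j m) \<longleftrightarrow> rightward k j \<or> leftward k j"
proof (induction k)
  case 0
  then show ?case by (auto simp: rightward_def leftward_def)
next
  case (Suc k)
  have "(\<forall>m<Suc k. walk j (m + 2) \<noteq> walk j m)
      \<longleftrightarrow> (rightward k j \<or> leftward k j) \<and> walk j (k + 2) \<noteq> walk j k"
    using Suc.IH by (auto simp: less_Suc_eq)
  moreover have "walk j (k + 2) \<noteq> walk j k \<longleftrightarrow> j (int (Suc k) - 1) < j (int (Suc k))"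
    if "rightward k j"
    using walk_rightward[OF that, of k] walk_rightward[OF that, of "Suc k"]
    by (simp add: numeral_2_eq_2 nbr_def)
  moreover have "walk j (k + 2) \<noteq> walk j k \<longleftrightarrow> j (- int (Suc k)) \<le> j (- int (Suc k) - 1)"
    if "leftward k j"
    using walk_leftward[OF that, of k] walk_leftward[OF that, of "Suc k"]
    by (simp add: numeral_2_eq_2 nbr_def)
  ultimately show ?case
    using rightward_imp_not_leftward[of k j] unfolding rightward_Suc leftward_Suc by blast
qed

lemma enat_le_Mtilde_iff: "enat k \<le> Mtilde j \<longleftrightarrow> (\<forall>m<k. walk j (m + 2) \<noteq> walk j m)"
proof (cases "\<exists>m. walk j (m + 2) = walk j m")
  case True
  let ?L = "LEAST m. walk j (m + 2) = walk j m"
  have "k \<le> ?L \<longleftrightarrow> (\<forall>m<k. walk j (m + 2) \<noteq> walk j m)"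
  proof
    show "\<forall>m<k. walk j (m + 2) \<noteq> walk j m" if "k \<le> ?L"
      using that not_less_Least[where P = "\<lambda>m. walk j (m + 2) = walk j m"] by auto
    show "k \<le> ?L" if "\<forall>m<k. walk j (m + 2) \<noteq> walk j m"
      using that LeastI_ex[OF True] not_le by blast
  qed
  then show ?thesis
    unfolding Mtilde_def if_P[OF True] enat_ord_simps(1) .
qed (simp add: Mtilde_def)

section \<open>Orderings of i.i.d.\ atomless random variables\<close>

lemma (in prob_space) indep_sets_reindex:
  assumes "indep_sets F (e ` K)" "inj_on e K"
  shows "indep_sets (\<lambda>i. F (e i)) K"
proof (rule indep_setsI)
  show "F (e i) \<subseteq> events" if "i \<in> K" for i
    using assms(1) that by (auto simp: indep_sets_def)
next
  fix A L assume L: "L \<noteq> {}" "L \<subseteq> K" "finite L" and A: "\<forall>j\<in>L. A j \<in> F (e j)"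
  define A' where "A' y = A (the_inv_into L e y)" for y
  have inj: "inj_on e L"
    using assms(2) L(2) by (rule inj_on_subset)
  have A'_e: "A' (e j) = A j" if "j \<in> L" for j
    using that inj by (simp add: A'_def the_inv_into_f_f)
  have "prob (\<Inter>y\<in>e ` L. A' y) = (\<Prod>y\<in>e ` L. prob (A' y))"
    using L A by (intro indep_setsD[OF assms(1)]) (auto simp: A'_e)
  then show "prob (\<Inter>j\<in>L. A j) = (\<Prod>j\<in>L. prob (A j))"
    using inj by (simp add: prod.reindex A'_e)
qed

lemma (in prob_space) indep_vars_reindex:
  assumes "indep_vars M' X (e ` K)" "inj_on e K"
  shows "indep_vars (\<lambda>i. M' (e i)) (\<lambda>i. X (e i)) K"
  using assms indep_sets_reindex[of "\<lambda>i. {X i -` A \<inter> space M |A. A \<in> sets (M' i)}" e K]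
  by (auto simp: indep_vars_def2)

lemma pred_strict_mono_on_PiM:
  fixes I :: "'i::{countable, order} set"
  shows "Measurable.pred (PiM I (\<lambda>_. borel :: real measure)) (strict_mono_on I)"
proof -
  have "Measurable.pred (PiM I (\<lambda>_. borel :: real measure)) (\<lambda>y. y r < y s)" if "r \<in> I" "s \<in> I" for r s
    by (intro borel_measurable_pred_less measurable_component_singleton that)
  then show ?thesis
    unfolding strict_mono_on_def by (intro pred_intros_countable pred_intros_imp') auto
qed

locale iid_continuous = prob_space M for M :: "'a measure" +
  fixes X :: "'i \<Rightarrow> 'a \<Rightarrow> real" and D :: "real measure"
  assumes indep: "prob_space.indep_vars M (\<lambda>_. borel) X UNIV"
    and distr_X: "\<And>i. distr M borel (X i) = D"
    and D_no_atoms: "\<And>x. emeasure D {x} = 0"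
begin

lemma measurable_X [measurable]: "X i \<in> borel_measurable M"
  using indep by (auto simp: indep_vars_def)

lemma distr_restrict_eq_PiM:
  assumes "inj_on e I" "I \<noteq> {}"
  shows "distr M (PiM I (\<lambda>_. borel)) (\<lambda>\<omega>. \<lambda>i\<in>I. X (e i) \<omega>) = PiM I (\<lambda>_. D)"
proof -
  have "indep_vars (\<lambda>_. borel) (\<lambda>i. X (e i)) I"
    using indep_vars_reindex[OF indep_vars_subset[OF indep] assms(1)] by simp
  then show ?thesis
    using assms(2) by (subst (asm) indep_vars_iff_distr_eq_PiM) (simp_all add: distr_X)
qed

lemma AE_X_neq:
  assumes "a \<noteq> b"
  shows "AE \<omega> in M. X a \<omega> \<noteq> X b \<omega>"
proof -
  have "inj (case_bool a b)"
    using assms by (auto simp: inj_on_def split: bool.split)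
  from indep_vars_reindex[OF indep_vars_subset[OF indep subset_UNIV] this]
  have "indep_vars (\<lambda>_. borel) (\<lambda>i. X (case_bool a b i)) UNIV"
    by simp
  then have "indep_var borel (X a) borel (X b)"
    unfolding indep_var_def by (rule indep_vars_cong[THEN iffD1, rotated -1]) (auto split: bool.split)
  then have joint: "distr M (borel \<Otimes>\<^sub>M borel) (\<lambda>\<omega>. (X a \<omega>, X b \<omega>)) = D \<Otimes>\<^sub>M D"
    by (simp add: indep_var_distribution_eq distr_X)
  interpret D: prob_space D
    using prob_space_distr[of "X a" borel] by (simp add: distr_X)
  have sets_D: "sets D = sets borel"
    using sets_distr[of M borel "X a"] by (simp add: distr_X)
  let ?diag = "{p :: real \<times> real. fst p = snd p}"
  have "{p \<in> space (borel \<Otimes>\<^sub>M borel). fst p = (snd p :: real)} \<in> sets (borel \<Otimes>\<^sub>M borel)"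
    by measurable
  then have diag: "?diag \<in> sets (D \<Otimes>\<^sub>M D)"
    using sets_pair_measure_cong[OF sets_D sets_D] by (simp add: space_pair_measure)
  have "emeasure (D \<Otimes>\<^sub>M D) ?diag = (\<integral>\<^sup>+x. emeasure D (Pair x -` ?diag) \<partial>D)"
    using diag by (rule D.emeasure_pair_measure_alt)
  also have "\<dots> = 0"
    by (simp add: vimage_def D_no_atoms)
  finally have "AE p in D \<Otimes>\<^sub>M D. fst p \<noteq> snd p"
    using diag by (intro AE_I'[of ?diag]) auto
  then show ?thesis
    using sets_D by (subst (asm) joint[symmetric], subst (asm) AE_distr_iff) auto
qed

lemma AE_inj_on:
  assumes "inj_on e I" "countable I"
  shows "AE \<omega> in M. inj_on (\<lambda>i. X (e i) \<omega>) I"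
proof -
  have "AE \<omega> in M. \<forall>a\<in>I. \<forall>b\<in>I. a \<noteq> b \<longrightarrow> X (e a) \<omega> \<noteq> X (e b) \<omega>"
    using assms by (intro AE_ball_countable' AE_impI AE_X_neq) (auto dest: inj_onD)
  then show ?thesis
    by eventually_elim (auto simp: inj_on_def)
qed

lemma prob_strict_mono_on_eq_PiM:
  fixes n :: nat
  assumes "inj_on e {..<n}" "n \<noteq> 0"
  shows "prob {\<omega> \<in> space M. strict_mono_on {..<n} (\<lambda>i. X (e i) \<omega>)}
    = measure (PiM {..<n} (\<lambda>_. D)) {y \<in> space (PiM {..<n} (\<lambda>_. borel)). strict_mono_on {..<n} y}"
proof -
  let ?P = "PiM {..<n} (\<lambda>_. borel :: real measure)"
  let ?Y = "\<lambda>\<omega>. \<lambda>i\<in>{..<n}. X (e i) \<omega>"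
  let ?S = "{y \<in> space ?P. strict_mono_on {..<n} y}"
  have "?Y \<in> M \<rightarrow>\<^sub>M ?P"
    by measurable
  moreover have "?S \<in> sets ?P"
    by (rule predE[OF pred_strict_mono_on_PiM])
  moreover have "{\<omega> \<in> space M. strict_mono_on {..<n} (\<lambda>i. X (e i) \<omega>)} = ?Y -` ?S \<inter> space M"
    by (auto simp: strict_mono_on_def space_PiM)
  ultimately have "prob {\<omega> \<in> space M. strict_mono_on {..<n} (\<lambda>i. X (e i) \<omega>)} = measure (distr M ?P ?Y) ?S"
    by (simp add: measure_distr)
  also have "distr M ?P ?Y = PiM {..<n} (\<lambda>_. D)"
    using assms by (simp add: distr_restrict_eq_PiM lessThan_empty_iff)
  finally show ?thesis .
qed

lemma prob_strict_mono_on: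
  assumes e: "inj_on e {..<n}"
  shows "prob {\<omega> \<in> space M. strict_mono_on {..<n} (\<lambda>i. X (e i) \<omega>)} = 1 / fact n"
proof (cases "n = 0")
  case True
  then show ?thesis
    by (simp add: strict_mono_on_def prob_space)
next
  case False
  define c where
    "c = measure (PiM {..<n} (\<lambda>_. D)) {y \<in> space (PiM {..<n} (\<lambda>_. borel)). strict_mono_on {..<n} y}"
  define E where "E \<sigma> = {\<omega> \<in> space M. strict_mono_on {..<n} (\<lambda>i. X (e (\<sigma> i)) \<omega>)}" for \<sigma>
  define Perms where "Perms = {\<sigma>. \<sigma> permutes {..<n}}"
  have E_events: "E \<sigma> \<in> events" for \<sigma>
    unfolding E_def strict_mono_on_def by measurable
  have prob_E: "prob (E \<sigma>) = c" if "\<sigma> \<in> Perms" for \<sigma>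
  proof -
    have "inj_on (e \<circ> \<sigma>) {..<n}"
      using that e by (simp add: Perms_def comp_inj_on permutes_inj_on permutes_image)
    from prob_strict_mono_on_eq_PiM[OF this False] show ?thesis
      by (simp add: E_def c_def)
  qed
  have "disjoint_family_on E Perms"
    by (auto simp: disjoint_family_on_def E_def Perms_def o_def
        dest: permutes_strict_mono_on_unique[where x = "\<lambda>i. X (e i) _"])
  moreover have "finite Perms"
    by (simp add: Perms_def finite_permutations)
  ultimately have "prob (\<Union>\<sigma>\<in>Perms. E \<sigma>) = (\<Sum>\<sigma>\<in>Perms. prob (E \<sigma>))"
    using E_events by (intro finite_measure_finite_Union) auto
  also have "\<dots> = fact n * c"
    using prob_E by (simp add: Perms_def card_permutations)
  finally have "prob (\<Union>\<sigma>\<in>Perms. E \<sigma>) = fact n * c" .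
  moreover have "AE \<omega> in M. \<omega> \<in> (\<Union>\<sigma>\<in>Perms. E \<sigma>)"
    using AE_inj_on[OF e countable_finite[OF finite_lessThan]] AE_space
  proof eventually_elim
    case (elim \<omega>)
    then obtain \<sigma> where "\<sigma> permutes {..<n}" "strict_mono_on {..<n} ((\<lambda>i. X (e i) \<omega>) \<circ> \<sigma>)"
      by (metis ex_permutes_strict_mono_on)
    with elim show ?case
      by (auto simp: E_def Perms_def o_def)
  qed
  then have "prob (\<Union>\<sigma>\<in>Perms. E \<sigma>) = 1"
    using E_events \<open>finite Perms\<close> by (subst AE_in_set_eq_1[symmetric]) auto
  moreover have "id \<in> Perms"
    by (simp add: Perms_def permutes_id)
  ultimately show ?thesis
    using prob_E[of id] by (simp add: E_def field_simps)
qed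

lemma prob_mono_on:
  assumes e: "inj_on e {..<n}"
  shows "prob {\<omega> \<in> space M. mono_on {..<n} (\<lambda>i. X (e i) \<omega>)} = 1 / fact n"
proof -
  have "AE \<omega> in M. mono_on {..<n} (\<lambda>i. X (e i) \<omega>) \<longleftrightarrow> strict_mono_on {..<n} (\<lambda>i. X (e i) \<omega>)"
    using AE_inj_on[OF e countable_finite[OF finite_lessThan]]
    by eventually_elim (auto intro: mono_imp_strict_mono strict_mono_on_imp_mono_on)
  then have "prob {\<omega> \<in> space M. mono_on {..<n} (\<lambda>i. X (e i) \<omega>)}
      = prob {\<omega> \<in> space M. strict_mono_on {..<n} (\<lambda>i. X (e i) \<omega>)}"
    by (intro measure_eq_AE) (auto simp: strict_mono_on_def mono_on_def monotone_on_def)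
  then show ?thesis
    using prob_strict_mono_on[OF e] by simp
qed

end

section \<open>The distribution of \<open>Mtilde\<close>\<close>

lemma two_div_fact_diff: "2 / fact (k + 2) - 2 / fact (k + 3) = 2 * (real k + 2) / fact (k + 3)"
proof -
  define F where "F = (fact (k + 2) :: real)"
  have "F > 0"
    by (simp add: F_def)
  have "2 / F - 2 / (c * F) = 2 * (c - 1) / (c * F)" if "c \<noteq> 0" for c
    using that \<open>F > 0\<close> by (simp add: field_simps)
  from this[of "real k + 3"]
  have "2 / F - 2 / ((real k + 3) * F) = 2 * (real k + 2) / ((real k + 3) * F)"
    by simp
  moreover have "fact (k + 3) = (real k + 3) * F"
    by (simp add: F_def fact_Suc numeral_3_eq_3)
  ultimately show ?thesis
    by (simp only: F_def[symmetric])
qed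

locale iid_couplings = iid_continuous M J D
  for M :: "'a measure" and J :: "int \<Rightarrow> 'a \<Rightarrow> real" and D :: "real measure"
begin

lemma prob_rightward: "prob {\<omega> \<in> space M. rightward k (\<lambda>e. J e \<omega>)} = 1 / fact (k + 2)"
proof -
  have "inj_on (\<lambda>i. int i - 1) {..<k + 2}"
    by (auto simp: inj_on_def)
  then show ?thesis
    unfolding rightward_iff_strict_mono_on by (rule prob_strict_mono_on)
qed

lemma prob_leftward: "prob {\<omega> \<in> space M. leftward k (\<lambda>e. J e \<omega>)} = 1 / fact (k + 2)"
proof -
  have "inj_on (\<lambda>i. - int i) {..<k + 2}"
    by (auto simp: inj_on_def)
  then show ?thesis
    unfolding leftward_iff_mono_on by (rule prob_mono_on)
qed

lemma Mtilde_ge_eq: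
  "{\<omega> \<in> space M. enat k \<le> Mtilde (\<lambda>e. J e \<omega>)}
    = {\<omega> \<in> space M. rightward k (\<lambda>e. J e \<omega>)} \<union> {\<omega> \<in> space M. leftward k (\<lambda>e. J e \<omega>)}"
  using enat_le_Mtilde_iff no_backtrack_iff by blast

lemma sets_rightward: "{\<omega> \<in> space M. rightward k (\<lambda>e. J e \<omega>)} \<in> events"
  unfolding rightward_def by measurable

lemma sets_leftward: "{\<omega> \<in> space M. leftward k (\<lambda>e. J e \<omega>)} \<in> events"
  unfolding leftward_def by measurable

lemma sets_Mtilde_ge: "{\<omega> \<in> space M. enat k \<le> Mtilde (\<lambda>e. J e \<omega>)} \<in> events"
  unfolding Mtilde_ge_eq using sets_rightward sets_leftward by (rule sets.Un)

lemma prob_Mtilde_ge: "prob {\<omega> \<in> space M. enat k \<le> Mtilde (\<lambda>e. J e \<omega>)} = 2 / fact (k + 2)"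
proof -
  have "prob {\<omega> \<in> space M. enat k \<le> Mtilde (\<lambda>e. J e \<omega>)}
      = prob {\<omega> \<in> space M. rightward k (\<lambda>e. J e \<omega>)} + prob {\<omega> \<in> space M. leftward k (\<lambda>e. J e \<omega>)}"
    unfolding Mtilde_ge_eq using sets_rightward sets_leftward rightward_imp_not_leftward
    by (intro finite_measure_Union) blast+
  then show ?thesis
    by (simp add: prob_rightward prob_leftward)
qed

lemma prob_Mtilde_eq:
  "prob {\<omega> \<in> space M. Mtilde (\<lambda>e. J e \<omega>) = enat k} = 2 * (real k + 2) / fact (k + 3)"
proof -
  let ?ge = "\<lambda>k. {\<omega> \<in> space M. enat k \<le> Mtilde (\<lambda>e. J e \<omega>)}"
  have "x = enat k \<longleftrightarrow> enat k \<le> x \<and> \<not> enat (Suc k) \<le> x" for x :: enat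
    by (cases x) auto
  then have "{\<omega> \<in> space M. Mtilde (\<lambda>e. J e \<omega>) = enat k} = ?ge k - ?ge (Suc k)"
    by blast
  moreover have "?ge (Suc k) \<subseteq> ?ge k"
    using order_trans[of "enat k" "enat (Suc k)"] by auto
  moreover have "Suc k + 2 = k + 3"
    by simp
  ultimately have "prob {\<omega> \<in> space M. Mtilde (\<lambda>e. J e \<omega>) = enat k}
      = 2 / fact (k + 2) - 2 / fact (k + 3)"
    using sets_Mtilde_ge by (simp only: finite_measure_Diff prob_Mtilde_ge)
  then show ?thesis
    unfolding two_div_fact_diff .
qed

lemma AE_Mtilde_finite: "AE \<omega> in M. Mtilde (\<lambda>e. J e \<omega>) \<noteq> \<infinity>"
proof -
  have infinity_iff: "x = \<infinity> \<longleftrightarrow> (\<forall>k. enat k \<le> x)" for x :: enat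
  proof (cases x)
    case (enat m)
    then show ?thesis
      using not_less_eq_eq by auto
  qed simp
  define N where "N = {\<omega> \<in> space M. Mtilde (\<lambda>e. J e \<omega>) = \<infinity>}"
  have N_eq: "N = (\<Inter>k. {\<omega> \<in> space M. enat k \<le> Mtilde (\<lambda>e. J e \<omega>)})"
    using infinity_iff by (auto simp: N_def)
  then have N: "N \<in> events"
    using sets_Mtilde_ge by auto
  have "(\<lambda>k. 2 / fact (k + 2) :: real) \<longlonglongrightarrow> 0"
  proof -
    have "(\<lambda>k. inverse (fact k) :: real) \<longlonglongrightarrow> 0"
      using summable_LIMSEQ_zero[OF summable_exp[of 1]] by simp
    from tendsto_mult_right_zero[OF LIMSEQ_ignore_initial_segment[OF this, of 2], of 2]
    show ?thesis
      by (simp add: divide_inverse)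
  qed
  moreover have "prob N \<le> 2 / fact (k + 2)" for k
  proof -
    have "prob N \<le> prob {\<omega> \<in> space M. enat k \<le> Mtilde (\<lambda>e. J e \<omega>)}"
      using sets_Mtilde_ge by (intro finite_measure_mono) (auto simp: N_eq)
    then show ?thesis
      by (simp add: prob_Mtilde_ge)
  qed
  ultimately have "prob N \<le> 0"
    using LIMSEQ_le_const by blast
  then have "prob N = 0"
    by (simp add: measure_le_0_iff)
  moreover have "{\<omega> \<in> space M. \<not> Mtilde (\<lambda>e. J e \<omega>) \<noteq> \<infinity>} = N"
    by (simp add: N_def)
  ultimately show ?thesis
    using N by (simp add: AE_iff_measurable emeasure_eq_measure)
qed

end

theorem mainTheorem5:
  fixes M :: "'a measure" and J :: "int \<Rightarrow> 'a \<Rightarrow> real" and D :: "real measure"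
  assumes "prob_space M"
    and "prob_space.indep_vars M (\<lambda>_. borel) J UNIV"
    and "\<And>e. distr M borel (J e) = D"
    and "\<And>x. emeasure D {x} = 0"
    and "emeasure D {0<..} = 1"
  shows "(AE \<omega> in M. Mtilde (\<lambda>e. J e \<omega>) \<noteq> \<infinity>)
    \<and> (\<forall>k::nat.
         measure M {\<omega> \<in> space M. enat k \<le> Mtilde (\<lambda>e. J e \<omega>)} = 2 / fact (k + 2)
       \<and> measure M {\<omega> \<in> space M. Mtilde (\<lambda>e. J e \<omega>) = enat k}
           = 2 * (real k + 2) / fact (k + 3))"
proof -
  interpret iid_couplings M J D
    using assms(1-4) by (simp add: iid_couplings_def iid_continuous_def iid_continuous_axioms_def)
  show ?thesis
    using AE_Mtilde_finite prob_Mtilde_ge prob_Mtilde_eq by blast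
qed

end
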